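(* In the noiseless discrete channel setting described in the context, with $(\theta,Y^n,X^n)$ generated by the model and $P_n,Q_n$ as defined there, $$I(\theta;Y^n\mid X^n)=nH(Y)-D(P_n\,\|\,Q_n),$$ and therefore, as $N\to\infty$, $$\left(1-\frac{H(\theta\mid Y^n,X^n)}{H(\theta)}\right)+\frac{D(P_n\,\|\,Q_n)}{H(\theta)}=(1+o(1))\frac{n}{n^*}.$$
   Context: Setting. For each $N\in\mathbb N$: $\Theta=\Theta_N$ is a finite subset of the unit sphere of $\mathbb R^N$ of cardinality $M=M_N$, with $M_N\to\infty$ and $\langle\theta,\theta'\rangle\ge 0$ for all $\theta,\theta'\in\Theta$; $P_\Theta$ is the uniform distribution on $\Theta$; $\mathcal D=\mathcal D_N$ is a distribution on $\mathbb R^{L}$; $g=g_N:\mathbb R^L\times\mathbb R^N\to\mathcal Y$ with $\mathcal Y$ finite of cardinality independent of $N$. One draws $\theta\sim P_\Theta$, independently $X_1,\dots,X_n$ i.i.d. from $\mathcal D$ ($n=n_N$), and sets $Y_i=g(X_i,\theta)$; $Y^n=(Y_i)_{i\le n}$, $X^n=(X_i)_{i\le n}$. $H$ denotes Shannon entropy, $I$ mutual information, $D$ Kullback–Leibler divergence (natural log). $Y$ denotes $g(X,\theta)$ with $X\sim\mathcal D$, $\theta\sim P_\Theta$ independent; $n^*=\lfloor H(\theta)/H(Y)\rfloor$. $P_n$ is the law of $(Y^n,X^n)$ under the model. $Q_n$ is the "null" law of $(Y^n,X^n)$ under which $X_1,\dots,X_n$ are i.i.d. from $\mathcal D$ and,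 independently of $X^n$, $Y_1,\dots,Y_n$ are i.i.d. with the law of $Y$. *)

theory Defs
  imports "HOL-Probability.Probability"
begin

text \<open>Vectors of R^k are rendered as extensional functions nat => real on {..<k}.
  All logarithms are natural: base exp 1.\<close>

definition sphere_vecs :: "nat \<Rightarrow> (nat \<Rightarrow> real) set" where
  "sphere_vecs N = {v \<in> {..<N} \<rightarrow>\<^sub>E (UNIV::real set). (\<Sum>i<N. (v i)^2) = 1}"

definition inner_vec :: "nat \<Rightarrow> (nat \<Rightarrow> real) \<Rightarrow> (nat \<Rightarrow> real) \<Rightarrow> real" where
  "inner_vec N u v = (\<Sum>i<N. u i * v i)"

definition euclid_space :: "nat \<Rightarrow> (nat \<Rightarrow> real) measure" where
  "euclid_space L = PiM {..<L} (\<lambda>_. borel)"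

definition model_measure :: "'t set \<Rightarrow> 'x measure \<Rightarrow> nat \<Rightarrow> ('t \<times> (nat \<Rightarrow> 'x)) measure" where
  "model_measure Th D n = uniform_count_measure Th \<Otimes>\<^sub>M PiM {..<n} (\<lambda>_. D)"

definition Xn_space :: "'x measure \<Rightarrow> nat \<Rightarrow> (nat \<Rightarrow> 'x) measure" where
  "Xn_space D n = PiM {..<n} (\<lambda>_. D)"

definition Yn_space :: "nat \<Rightarrow> (nat \<Rightarrow> 'y) measure" where
  "Yn_space n = PiM {..<n} (\<lambda>_. count_space UNIV)"

definition Yn_rv :: "('x \<Rightarrow> 't \<Rightarrow> 'y) \<Rightarrow> nat \<Rightarrow> ('t \<times> (nat \<Rightarrow> 'x)) \<Rightarrow> (nat \<Rightarrow> 'y)" where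
  "Yn_rv g n \<omega> = (\<lambda>i\<in>{..<n}. g (snd \<omega> i) (fst \<omega>))"

definition single_measure :: "'t set \<Rightarrow> 'x measure \<Rightarrow> ('t \<times> 'x) measure" where
  "single_measure Th D = uniform_count_measure Th \<Otimes>\<^sub>M D"

definition Y_law :: "'t set \<Rightarrow> 'x measure \<Rightarrow> ('x \<Rightarrow> 't \<Rightarrow> 'y) \<Rightarrow> 'y measure" where
  "Y_law Th D g = distr (single_measure Th D) (count_space UNIV) (\<lambda>(t, x). g x t)"

definition H_Y :: "'t set \<Rightarrow> 'x measure \<Rightarrow> ('x \<Rightarrow> 't \<Rightarrow> 'y) \<Rightarrow> real" where
  "H_Y Th D g = prob_space.entropy (single_measure Th D) (exp 1) (count_space UNIV) (\<lambda>(t, x). g x t)"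

definition H_theta :: "'t set \<Rightarrow> real" where
  "H_theta Th = prob_space.entropy (uniform_count_measure Th) (exp 1) (count_space Th) (\<lambda>t. t)"

definition n_star :: "'t set \<Rightarrow> 'x measure \<Rightarrow> ('x \<Rightarrow> 't \<Rightarrow> 'y) \<Rightarrow> nat" where
  "n_star Th D g = nat \<lfloor>H_theta Th / H_Y Th D g\<rfloor>"

definition P_law :: "'t set \<Rightarrow> 'x measure \<Rightarrow> ('x \<Rightarrow> 't \<Rightarrow> 'y) \<Rightarrow> nat \<Rightarrow> ((nat \<Rightarrow> 'y) \<times> (nat \<Rightarrow> 'x)) measure" where
  "P_law Th D g n = distr (model_measure Th D n) (Yn_space n \<Otimes>\<^sub>M Xn_space D n) (\<lambda>\<omega>. (Yn_rv g n \<omega>, snd \<omega>))"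

definition Q_law :: "'t set \<Rightarrow> 'x measure \<Rightarrow> ('x \<Rightarrow> 't \<Rightarrow> 'y) \<Rightarrow> nat \<Rightarrow> ((nat \<Rightarrow> 'y) \<times> (nat \<Rightarrow> 'x)) measure" where
  "Q_law Th D g n = PiM {..<n} (\<lambda>_. Y_law Th D g) \<Otimes>\<^sub>M Xn_space D n"

text \<open>D(P_n || Q_n) (the library's KL_divergence b M N is D(N || M)).\<close>
definition KL_PQ :: "'t set \<Rightarrow> 'x measure \<Rightarrow> ('x \<Rightarrow> 't \<Rightarrow> 'y) \<Rightarrow> nat \<Rightarrow> real" where
  "KL_PQ Th D g n = KL_divergence (exp 1) (Q_law Th D g n) (P_law Th D g n)"

definition cond_MI :: "'t set \<Rightarrow> 'x measure \<Rightarrow> ('x \<Rightarrow> 't \<Rightarrow> 'y) \<Rightarrow> nat \<Rightarrow> real" where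
  "cond_MI Th D g n = prob_space.conditional_mutual_information (model_measure Th D n) (exp 1)
     (count_space Th) (Yn_space n) (Xn_space D n) fst (Yn_rv g n) snd"

definition cond_H :: "'t set \<Rightarrow> 'x measure \<Rightarrow> ('x \<Rightarrow> 't \<Rightarrow> 'y) \<Rightarrow> nat \<Rightarrow> real" where
  "cond_H Th D g n = prob_space.conditional_entropy (model_measure Th D n) (exp 1)
     (count_space Th) (Yn_space n \<Otimes>\<^sub>M Xn_space D n) fst (\<lambda>\<omega>. (Yn_rv g n \<omega>, snd \<omega>))"

end

theory Submission
  imports Defs
begin

(* Given theta and X^n the outputs Y^n = F(theta, X^n) are determined, so (theta, Y^n, X^n) has the
   density [F(t, x) = y] / M with respect to counting measure times the law of X^n, and (Y^n, X^n)
   has the density p(y, x) = #{t. F(t, x) = y} / M.  Writing lambda = E ln p(Y^n, X^n), all three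
   quantities become explicit expectations: I(theta; Y^n | X^n) = I(theta; (Y^n, X^n)) = -lambda
   because theta and X^n are independent, H(theta | Y^n, X^n) = ln M + lambda, and
   D(P_n || Q_n) = E ln (p(Y^n, X^n) / prod_i p_Y(Y_i)) = lambda + n H(Y) because every Y_i has the
   law of Y.  This gives the identity, and shows that the left-hand side of the asymptotic claim is
   exactly n H(Y) / H(theta).  Since H(theta) = ln M tends to infinity while H(Y) is bounded, the
   rounding in n^* = floor (H(theta) / H(Y)) only costs a factor 1 + o(1). *)

lemma Yn_space_eq_count_space:
  "Yn_space n = count_space (PiE {..<n} (\<lambda>_. UNIV :: 'y::finite set))"
proof (rule measure_eqI_finite[where A="PiE {..<n} (\<lambda>_. UNIV :: 'y::finite set)"])
  let ?E = "PiE {..<n} (\<lambda>_. UNIV :: 'y::finite set)"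
  have singleton: "{y} = PiE {..<n} (\<lambda>i. {y i})" if "y \<in> ?E" for y
    using that by (auto simp: PiE_iff extensional_def fun_eq_iff) (metis lessThan_iff)
  have "A \<in> sets (Yn_space n)" if "A \<subseteq> ?E" for A
  proof -
    have "finite A" using that by (rule finite_subset) (simp add: finite_PiE)
    have "A = (\<Union>y\<in>A. {y})" by auto
    also have "\<dots> \<in> sets (Yn_space n)"
      using \<open>finite A\<close> that
      by (intro sets.finite_UN) (auto simp: Yn_space_def singleton intro!: sets_PiM_I_finite)
    finally show ?thesis .
  qed
  moreover have "sets (Yn_space n) \<subseteq> Pow ?E"
    using sets.sets_into_space by (fastforce simp: Yn_space_def space_PiM)
  ultimately show "sets (Yn_space n) = Pow ?E" by auto
  show "sets (count_space ?E) = Pow ?E" by simp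
  show "finite ?E" by (simp add: finite_PiE)
  fix a assume a: "a \<in> ?E"
  interpret product_sigma_finite "\<lambda>_::nat. count_space (UNIV::'y set)"
    by (simp add: product_sigma_finite_def sigma_finite_measure_count_space_finite)
  have "emeasure (Yn_space n) {a} = (\<Prod>i<n. emeasure (count_space UNIV) {a i})"
    unfolding Yn_space_def singleton[OF a] by (subst emeasure_PiM) auto
  then show "emeasure (Yn_space n) {a} = emeasure (count_space ?E) {a}"
    using a by simp
qed

lemma nn_integral_count_space_pair:
  assumes "finite A" and "sigma_finite_measure M"
    and h: "h \<in> borel_measurable (count_space A \<Otimes>\<^sub>M M)"
  shows "(\<integral>\<^sup>+z. h z \<partial>(count_space A \<Otimes>\<^sub>M M)) = (\<Sum>a\<in>A. \<integral>\<^sup>+y. h (a, y) \<partial>M)"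
proof -
  interpret sigma_finite_measure M by fact
  show ?thesis
    by (simp add: nn_integral_fst[OF h, symmetric] nn_integral_count_space_finite[OF \<open>finite A\<close>])
qed

lemma nn_integral_uniform_count_measure_pair:
  assumes "finite A" and "A \<noteq> {}" and "sigma_finite_measure M"
    and h: "h \<in> borel_measurable (count_space A \<Otimes>\<^sub>M M)"
  shows "(\<integral>\<^sup>+z. h z \<partial>(uniform_count_measure A \<Otimes>\<^sub>M M))
     = (\<Sum>a\<in>A. ennreal (1 / real (card A)) * \<integral>\<^sup>+y. h (a, y) \<partial>M)"
proof -
  interpret sigma_finite_measure M by fact
  have "h \<in> borel_measurable (uniform_count_measure A \<Otimes>\<^sub>M M)"
    using h by (simp add: measurable_cong_sets[OF sets_pair_measure_cong[OF
          sets_uniform_count_measure_count_space refl] refl])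
  then have "(\<integral>\<^sup>+z. h z \<partial>(uniform_count_measure A \<Otimes>\<^sub>M M))
     = (\<integral>\<^sup>+a. (\<integral>\<^sup>+y. h (a, y) \<partial>M) \<partial>uniform_count_measure A)"
    by (rule nn_integral_fst[symmetric])
  also have "\<dots> = (\<Sum>a\<in>A. ennreal (1 / real (card A)) * \<integral>\<^sup>+y. h (a, y) \<partial>M)"
    unfolding uniform_count_measure_def by (rule nn_integral_point_measure_finite[OF \<open>finite A\<close>])
  finally show ?thesis .
qed

lemma emeasure_distr_eq_nn_integral:
  assumes X: "X \<in> M \<rightarrow>\<^sub>M N" and A: "A \<in> sets N"
  shows "emeasure (distr M N X) A = (\<integral>\<^sup>+\<omega>. indicator A (X \<omega>) \<partial>M)"
proof -
  have "emeasure (distr M N X) A = emeasure M (X -` A \<inter> space M)"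
    using A X by (simp add: emeasure_distr)
  also have "\<dots> = (\<integral>\<^sup>+\<omega>. indicator (X -` A \<inter> space M) \<omega> \<partial>M)"
    using A X by (simp add: measurable_sets)
  also have "\<dots> = (\<integral>\<^sup>+\<omega>. indicator A (X \<omega>) \<partial>M)"
    by (intro nn_integral_cong) (auto split: split_indicator)
  finally show ?thesis .
qed

lemma distributedI_nn_integral:
  assumes X: "X \<in> M \<rightarrow>\<^sub>M N" and p: "p \<in> borel_measurable N"
    and eq: "\<And>A. A \<in> sets N \<Longrightarrow>
      (\<integral>\<^sup>+z. p z * indicator A z \<partial>N) = (\<integral>\<^sup>+\<omega>. indicator A (X \<omega>) \<partial>M)"
  shows "distributed M N X p"
  unfolding distributed_def
proof (intro conjI X p measure_eqI)
  fix A assume "A \<in> sets (distr M N X)"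
  then have A: "A \<in> sets N" by simp
  then show "emeasure (distr M N X) A = emeasure (density N p) A"
    using p by (simp add: emeasure_distr_eq_nn_integral[OF X] emeasure_density eq)
qed simp

lemma measurable_eq_count_space:
  assumes f: "f \<in> M \<rightarrow>\<^sub>M count_space A" and h: "h \<in> M \<rightarrow>\<^sub>M count_space A"
    and "countable A"
  shows "(\<lambda>x. f x = h x) \<in> M \<rightarrow>\<^sub>M count_space UNIV"
proof -
  have "(\<lambda>x. (\<lambda>a x. f x = a) (h x) x) \<in> M \<rightarrow>\<^sub>M count_space UNIV"
  proof (rule measurable_compose_countable'[OF _ h \<open>countable A\<close>])
    fix a assume "a \<in> A"
    show "(\<lambda>x. f x = a) \<in> M \<rightarrow>\<^sub>M count_space UNIV"
      using measurable_compose[OF f measurable_count_space[of "\<lambda>y. y = a" A]] by simp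
  qed
  then show ?thesis by simp
qed

lemma entropy_term_bounds:
  fixes p :: real
  assumes "0 \<le> p" "p \<le> 1"
  shows "0 \<le> - (p * ln p)" "- (p * ln p) \<le> 1"
proof -
  show "0 \<le> - (p * ln p)"
    using assms by (cases "p = 0") (auto simp: mult_nonneg_nonpos)
  show "- (p * ln p) \<le> 1"
  proof (cases "p = 0")
    case False
    then have "0 < p" using assms by simp
    have "- ln p \<le> 1 / p - 1"
      using ln_le_minus_one[of "1 / p"] \<open>0 < p\<close> by (simp add: ln_div)
    then have "p * (- ln p) \<le> p * (1 / p - 1)"
      using \<open>0 < p\<close> by (intro mult_left_mono) auto
    also have "\<dots> = 1 - p" using \<open>0 < p\<close> by (simp add: field_simps)
    finally show ?thesis using assms by simp
  qed simp
qed

lemma floor_quotient_approx: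
  fixes H h :: real
  assumes "0 < h" "h \<le> H"
  shows "\<bar>h * real (nat \<lfloor>H / h\<rfloor>) / H - 1\<bar> \<le> h / H"
proof -
  define k where "k = real (nat \<lfloor>H / h\<rfloor>)"
  have "0 < H" using assms by simp
  have "k = of_int \<lfloor>H / h\<rfloor>"
    using assms by (simp add: k_def)
  then have "H / h - 1 < k" "k \<le> H / h"
    by linarith+
  then have "H - h < h * k" "h * k \<le> H"
    using assms by (simp_all add: field_simps)
  then have "\<bar>h * k - H\<bar> \<le> h"
    by (simp add: abs_le_iff)
  moreover have "h * k / H - 1 = (h * k - H) / H"
    using \<open>0 < H\<close> by (simp add: field_simps)
  ultimately show ?thesis
    using \<open>0 < H\<close> by (simp add: k_def[symmetric] abs_divide divide_right_mono)
qed

lemma floor_quotient_asymptotic: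
  fixes H h r :: "nat \<Rightarrow> real"
  assumes H: "filterlim H at_top sequentially"
    and h_nonneg: "\<And>N. 0 \<le> h N" and h_le: "\<And>N. h N \<le> K"
  shows "\<exists>\<epsilon>. \<epsilon> \<longlonglongrightarrow> 0 \<and>
    (\<forall>\<^sub>F N in sequentially. r N * h N / H N = (1 + \<epsilon> N) * (r N / real (nat \<lfloor>H N / h N\<rfloor>)))"
proof -
  define \<epsilon> where "\<epsilon> N = (if h N = 0 then 0 else h N * real (nat \<lfloor>H N / h N\<rfloor>) / H N - 1)" for N
  have large: "\<forall>\<^sub>F N in sequentially. K < H N \<and> 0 < H N"
    using H by (simp add: filterlim_at_top_dense eventually_conj)
  have "\<forall>\<^sub>F N in sequentially. norm (\<epsilon> N) \<le> K / H N"
    using large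
  proof (rule eventually_mono)
    fix N assume "K < H N \<and> 0 < H N"
    then show "norm (\<epsilon> N) \<le> K / H N"
      using floor_quotient_approx[of "h N" "H N"] h_nonneg[of N] h_le[of N]
      by (auto simp: \<epsilon>_def divide_right_mono intro: order_trans)
  qed
  moreover have "(\<lambda>N. K / H N) \<longlonglongrightarrow> 0"
    by (rule tendsto_divide_0[OF tendsto_const filterlim_at_top_imp_at_infinity[OF H]])
  ultimately have "\<epsilon> \<longlonglongrightarrow> 0"
    by (rule Lim_null_comparison)
  moreover have "\<forall>\<^sub>F N in sequentially.
      r N * h N / H N = (1 + \<epsilon> N) * (r N / real (nat \<lfloor>H N / h N\<rfloor>))"
    using large
  proof (rule eventually_mono)
    fix N assume N: "K < H N \<and> 0 < H N"
    show "r N * h N / H N = (1 + \<epsilon> N) * (r N / real (nat \<lfloor>H N / h N\<rfloor>))"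
    proof (cases "h N = 0")
      case False
      then have "0 < h N" using h_nonneg[of N] by simp
      then have "1 \<le> H N / h N" using N h_le[of N] by (simp add: field_simps)
      define k where "k = real (nat \<lfloor>H N / h N\<rfloor>)"
      have "0 < k" using \<open>1 \<le> H N / h N\<close> by (simp add: k_def)
      then show ?thesis
        using N False unfolding \<epsilon>_def k_def[symmetric] by (simp add: field_simps)
    qed (simp add: \<epsilon>_def)
  qed
  ultimately show ?thesis by blast
qed

section \<open>Densities in the noiseless channel model\<close>

locale noiseless_channel =
  fixes T :: "'t set" and \<mu> :: "'x measure" and g :: "'x \<Rightarrow> 't \<Rightarrow> 'y::finite" and n :: nat
  assumes finite_T: "finite T" and T_nonempty: "T \<noteq> {}" and prob_space_\<mu>: "prob_space \<mu>"
    and g_measurable: "\<And>t. t \<in> T \<Longrightarrow> (\<lambda>x. g x t) \<in> \<mu> \<rightarrow>\<^sub>M count_space UNIV"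
begin

abbreviation "PT \<equiv> uniform_count_measure T"
abbreviation "Xs \<equiv> Xn_space \<mu> n"
abbreviation "\<Omega> \<equiv> model_measure T \<mu> n"
abbreviation "Ys \<equiv> PiE {..<n} (\<lambda>_. UNIV :: 'y set)"
abbreviation "Yn \<equiv> Yn_rv g n"
abbreviation "YX \<equiv> \<lambda>\<omega>. (Yn \<omega>, snd \<omega>)"
abbreviation "TYX \<equiv> \<lambda>\<omega>. (fst \<omega>, Yn \<omega>, snd \<omega>)"
abbreviation "cT \<equiv> count_space T"
abbreviation "cYs \<equiv> count_space Ys"
abbreviation "m \<equiv> real (card T)"

lemma card_T_pos: "0 < m"
  using finite_T T_nonempty by (simp add: card_gt_0_iff)

lemma prob_space_Xs: "prob_space Xs"
  unfolding Xn_space_def by (rule prob_space_PiM) (rule prob_space_\<mu>)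

lemma sigma_finite_Xs: "sigma_finite_measure Xs"
  using prob_space_Xs by (simp add: prob_space_imp_sigma_finite)

lemma sigma_finite_cT: "sigma_finite_measure cT"
  by (rule sigma_finite_measure_count_space_finite[OF finite_T])

lemma finite_Ys: "finite Ys"
  by (simp add: finite_PiE)

lemma sigma_finite_Ys_Xs: "sigma_finite_measure (cYs \<Otimes>\<^sub>M Xs)"
proof -
  interpret Ys: sigma_finite_measure cYs
    by (rule sigma_finite_measure_count_space_finite[OF finite_Ys])
  interpret Xs: sigma_finite_measure Xs by (rule sigma_finite_Xs)
  interpret pair_sigma_finite cYs Xs ..
  show ?thesis ..
qed

lemma model_eq: "\<Omega> = PT \<Otimes>\<^sub>M Xs"
  by (simp add: model_measure_def Xn_space_def)

lemma prob_space_\<Omega>: "prob_space \<Omega>"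
  unfolding model_eq
  by (rule prob_space_pair[OF prob_space_uniform_count_measure[OF finite_T T_nonempty] prob_space_Xs])

lemma information_space_\<Omega>: "information_space \<Omega> (exp 1)"
  using prob_space_\<Omega> by (simp add: information_space_def information_space_axioms_def)

lemma sets_\<Omega>: "sets \<Omega> = sets (cT \<Otimes>\<^sub>M Xs)"
  unfolding model_eq by (rule sets_pair_measure_cong[OF sets_uniform_count_measure_count_space refl])

lemma space_\<Omega>: "space \<Omega> = T \<times> space Xs"
  unfolding model_eq by (simp add: space_pair_measure space_uniform_count_measure)

lemma measurable_\<Omega>_iff: "f \<in> \<Omega> \<rightarrow>\<^sub>M N \<longleftrightarrow> f \<in> (cT \<Otimes>\<^sub>M Xs) \<rightarrow>\<^sub>M N"
  by (simp add: measurable_cong_sets[OF sets_\<Omega> refl])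

lemma Yn_in_Ys: "Yn \<omega> \<in> Ys"
  by (simp add: Yn_rv_def)

lemma measurable_Yn: "Yn \<in> (cT \<Otimes>\<^sub>M Xs) \<rightarrow>\<^sub>M cYs"
proof -
  have "Yn \<in> (cT \<Otimes>\<^sub>M Xs) \<rightarrow>\<^sub>M Yn_space n"
    unfolding Yn_space_def Yn_rv_def
  proof (rule measurable_restrict)
    fix i assume i: "i \<in> {..<n}"
    have "(\<lambda>\<omega>. (\<lambda>t \<omega>. g (snd \<omega> i) t) (fst \<omega>) \<omega>) \<in> (cT \<Otimes>\<^sub>M Xs) \<rightarrow>\<^sub>M count_space UNIV"
    proof (rule measurable_compose_countable'[where I=T])
      fix t assume t: "t \<in> T"
      have "(\<lambda>\<omega>. snd \<omega> i) \<in> (cT \<Otimes>\<^sub>M Xs) \<rightarrow>\<^sub>M \<mu>"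
        using i unfolding Xn_space_def by measurable
      then show "(\<lambda>\<omega>. g (snd \<omega> i) t) \<in> (cT \<Otimes>\<^sub>M Xs) \<rightarrow>\<^sub>M count_space UNIV"
        using measurable_compose[OF _ g_measurable[OF t]] by blast
    qed (auto simp: finite_T countable_finite)
    then show "(\<lambda>\<omega>. g (snd \<omega> i) (fst \<omega>)) \<in> (cT \<Otimes>\<^sub>M Xs) \<rightarrow>\<^sub>M count_space UNIV"
      by simp
  qed
  then show ?thesis by (simp add: Yn_space_eq_count_space)
qed

lemma measurable_YX: "YX \<in> \<Omega> \<rightarrow>\<^sub>M (cYs \<Otimes>\<^sub>M Xs)"
  unfolding measurable_\<Omega>_iff using measurable_Yn by measurable

lemma measurable_TYX: "TYX \<in> (cT \<Otimes>\<^sub>M Xs) \<rightarrow>\<^sub>M (cT \<Otimes>\<^sub>M (cYs \<Otimes>\<^sub>M Xs))"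
  using measurable_Yn by measurable

lemma nn_integral_\<Omega>:
  assumes "h \<in> borel_measurable (cT \<Otimes>\<^sub>M Xs)"
  shows "(\<integral>\<^sup>+\<omega>. h \<omega> \<partial>\<Omega>) = (\<Sum>t\<in>T. ennreal (1 / m) * \<integral>\<^sup>+x. h (t, x) \<partial>Xs)"
  unfolding model_eq
  by (rule nn_integral_uniform_count_measure_pair[OF finite_T T_nonempty sigma_finite_Xs assms])

lemma sum_T_uniform: "(\<Sum>t\<in>T. ennreal (1 / m) * c) = c"
proof -
  have "(\<Sum>t\<in>T. ennreal (1 / m) * c) = (ennreal m * ennreal (1 / m)) * c"
    by (simp add: ennreal_of_nat_eq_real_of_nat mult.assoc)
  also have "\<dots> = ennreal (m * (1 / m)) * c"
    by (subst ennreal_mult) auto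
  also have "\<dots> = c" using card_T_pos by simp
  finally show ?thesis .
qed

definition p_joint :: "'t \<times> (nat \<Rightarrow> 'y) \<times> (nat \<Rightarrow> 'x) \<Rightarrow> real" where
  "p_joint z = (if Yn (fst z, snd (snd z)) = fst (snd z) then 1 / m else 0)"

definition p_YX :: "(nat \<Rightarrow> 'y) \<times> (nat \<Rightarrow> 'x) \<Rightarrow> real" where
  "p_YX z = (\<Sum>t\<in>T. p_joint (t, z))"

lemma p_joint_nonneg: "0 \<le> p_joint z"
  by (simp add: p_joint_def)

lemma p_YX_nonneg: "0 \<le> p_YX z"
  by (simp add: p_YX_def sum_nonneg p_joint_nonneg)

lemma measurable_p_joint: "p_joint \<in> borel_measurable (cT \<Otimes>\<^sub>M (cYs \<Otimes>\<^sub>M Xs))"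
proof -
  have Yn_TX: "(\<lambda>z. Yn (fst z, snd (snd z))) \<in> (cT \<Otimes>\<^sub>M (cYs \<Otimes>\<^sub>M Xs)) \<rightarrow>\<^sub>M cYs"
    by (rule measurable_compose[OF _ measurable_Yn]) measurable
  have Y: "(\<lambda>z. fst (snd z)) \<in> (cT \<Otimes>\<^sub>M (cYs \<Otimes>\<^sub>M Xs)) \<rightarrow>\<^sub>M cYs"
    by measurable
  have "{z \<in> space (cT \<Otimes>\<^sub>M (cYs \<Otimes>\<^sub>M Xs)). Yn (fst z, snd (snd z)) = fst (snd z)}
      \<in> sets (cT \<Otimes>\<^sub>M (cYs \<Otimes>\<^sub>M Xs))"
    using measurable_eq_count_space[OF Yn_TX Y] finite_Ys by (simp add: pred_def countable_finite)
  then show ?thesis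
    unfolding p_joint_def by (rule measurable_If[rotated 2]) auto
qed

lemma measurable_p_joint_slice: "t \<in> T \<Longrightarrow> (\<lambda>v. p_joint (t, v)) \<in> borel_measurable (cYs \<Otimes>\<^sub>M Xs)"
  by (rule measurable_compose[OF _ measurable_p_joint], rule measurable_Pair1') simp

lemma measurable_p_YX: "p_YX \<in> borel_measurable (cYs \<Otimes>\<^sub>M Xs)"
  unfolding p_YX_def by (intro borel_measurable_sum measurable_p_joint_slice)

lemma measurable_Pair_T: "t \<in> T \<Longrightarrow> Pair t \<in> N \<rightarrow>\<^sub>M (cT \<Otimes>\<^sub>M N)"
  by (rule measurable_Pair1') simp

lemma nn_integral_p_joint:
  assumes h: "h \<in> borel_measurable (cT \<Otimes>\<^sub>M (cYs \<Otimes>\<^sub>M Xs))"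
  shows "(\<integral>\<^sup>+z. ennreal (p_joint z) * h z \<partial>(cT \<Otimes>\<^sub>M (cYs \<Otimes>\<^sub>M Xs))) = (\<integral>\<^sup>+\<omega>. h (TYX \<omega>) \<partial>\<Omega>)"
proof -
  have hp: "(\<lambda>z. ennreal (p_joint z) * h z) \<in> borel_measurable (cT \<Otimes>\<^sub>M (cYs \<Otimes>\<^sub>M Xs))"
    using measurable_p_joint h by measurable
  have slice: "(\<integral>\<^sup>+v. ennreal (p_joint (t, v)) * h (t, v) \<partial>(cYs \<Otimes>\<^sub>M Xs))
      = ennreal (1 / m) * \<integral>\<^sup>+x. h (TYX (t, x)) \<partial>Xs" if t: "t \<in> T" for t
  proof -
    have "(\<integral>\<^sup>+v. ennreal (p_joint (t, v)) * h (t, v) \<partial>(cYs \<Otimes>\<^sub>M Xs))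
        = (\<Sum>y\<in>Ys. \<integral>\<^sup>+x. ennreal (p_joint (t, y, x)) * h (t, y, x) \<partial>Xs)"
      by (intro nn_integral_count_space_pair[OF finite_Ys sigma_finite_Xs]
          measurable_compose[OF measurable_Pair_T[OF t] hp])
    also have "\<dots> = (\<integral>\<^sup>+x. (\<Sum>y\<in>Ys. ennreal (p_joint (t, y, x)) * h (t, y, x)) \<partial>Xs)"
    proof (rule nn_integral_sum[symmetric])
      fix y assume "y \<in> Ys"
      then show "(\<lambda>x. ennreal (p_joint (t, y, x)) * h (t, y, x)) \<in> borel_measurable Xs"
        by (intro measurable_compose[OF _ hp] measurable_compose[OF _ measurable_Pair_T[OF t]]
            measurable_Pair1') simp
    qed
    also have "\<dots> = (\<integral>\<^sup>+x. ennreal (1 / m) * h (TYX (t, x)) \<partial>Xs)"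
    proof (rule nn_integral_cong)
      fix x
      have "(\<Sum>y\<in>Ys. ennreal (p_joint (t, y, x)) * h (t, y, x))
          = (\<Sum>y\<in>Ys. if Yn (t, x) = y then ennreal (1 / m) * h (t, y, x) else 0)"
        by (intro sum.cong) (auto simp: p_joint_def)
      then show "(\<Sum>y\<in>Ys. ennreal (p_joint (t, y, x)) * h (t, y, x)) = ennreal (1 / m) * h (TYX (t, x))"
        using Yn_in_Ys[of "(t, x)"] finite_Ys by (simp add: sum.delta)
    qed
    also have "\<dots> = ennreal (1 / m) * \<integral>\<^sup>+x. h (TYX (t, x)) \<partial>Xs"
      by (intro nn_integral_cmult measurable_compose[OF _ h]
          measurable_compose[OF measurable_Pair_T[OF t] measurable_TYX])
    finally show ?thesis .
  qed
  have "(\<integral>\<^sup>+z. ennreal (p_joint z) * h z \<partial>(cT \<Otimes>\<^sub>M (cYs \<Otimes>\<^sub>M Xs)))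
      = (\<Sum>t\<in>T. ennreal (1 / m) * \<integral>\<^sup>+x. h (TYX (t, x)) \<partial>Xs)"
    by (simp add: nn_integral_count_space_pair[OF finite_T sigma_finite_Ys_Xs hp] slice)
  also have "\<dots> = (\<integral>\<^sup>+\<omega>. h (TYX \<omega>) \<partial>\<Omega>)"
    by (rule nn_integral_\<Omega>[symmetric]) (rule measurable_compose[OF measurable_TYX h])
  finally show ?thesis .
qed

lemma nn_integral_p_YX:
  assumes h: "h \<in> borel_measurable (cYs \<Otimes>\<^sub>M Xs)"
  shows "(\<integral>\<^sup>+z. ennreal (p_YX z) * h z \<partial>(cYs \<Otimes>\<^sub>M Xs)) = (\<integral>\<^sup>+\<omega>. h (YX \<omega>) \<partial>\<Omega>)"
proof -
  have h_snd: "(\<lambda>z. h (snd z)) \<in> borel_measurable (cT \<Otimes>\<^sub>M (cYs \<Otimes>\<^sub>M Xs))"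
    using h by measurable
  have hp: "(\<lambda>z. ennreal (p_joint z) * h (snd z)) \<in> borel_measurable (cT \<Otimes>\<^sub>M (cYs \<Otimes>\<^sub>M Xs))"
    using measurable_p_joint h_snd by measurable
  have "(\<integral>\<^sup>+z. ennreal (p_YX z) * h z \<partial>(cYs \<Otimes>\<^sub>M Xs))
      = (\<integral>\<^sup>+z. (\<Sum>t\<in>T. ennreal (p_joint (t, z)) * h z) \<partial>(cYs \<Otimes>\<^sub>M Xs))"
    by (intro nn_integral_cong)
       (simp add: p_YX_def sum_ennreal p_joint_nonneg sum_distrib_right[symmetric])
  also have "\<dots> = (\<Sum>t\<in>T. \<integral>\<^sup>+z. ennreal (p_joint (t, z)) * h z \<partial>(cYs \<Otimes>\<^sub>M Xs))"
  proof (rule nn_integral_sum)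
    fix t assume "t \<in> T"
    then show "(\<lambda>z. ennreal (p_joint (t, z)) * h z) \<in> borel_measurable (cYs \<Otimes>\<^sub>M Xs)"
      using measurable_p_joint_slice h by measurable
  qed
  also have "\<dots> = (\<integral>\<^sup>+z. ennreal (p_joint z) * h (snd z) \<partial>(cT \<Otimes>\<^sub>M (cYs \<Otimes>\<^sub>M Xs)))"
    by (rule nn_integral_count_space_pair[OF finite_T sigma_finite_Ys_Xs hp, symmetric, simplified])
  also have "\<dots> = (\<integral>\<^sup>+\<omega>. h (YX \<omega>) \<partial>\<Omega>)"
    using nn_integral_p_joint[OF h_snd] by simp
  finally show ?thesis .
qed

lemma nn_integral_\<Omega>_fst: "(\<integral>\<^sup>+\<omega>. h (fst \<omega>) \<partial>\<Omega>) = (\<integral>\<^sup>+t. ennreal (1 / m) * h t \<partial>cT)"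
proof -
  have "h \<in> borel_measurable cT" by simp
  then have "(\<integral>\<^sup>+\<omega>. h (fst \<omega>) \<partial>\<Omega>) = (\<Sum>t\<in>T. ennreal (1 / m) * \<integral>\<^sup>+x. h t \<partial>Xs)"
    using nn_integral_\<Omega>[of "\<lambda>\<omega>. h (fst \<omega>)"] by (simp add: measurable_compose[OF measurable_fst])
  also have "\<dots> = (\<Sum>t\<in>T. ennreal (1 / m) * h t)"
    by (simp add: prob_space.emeasure_space_1[OF prob_space_Xs])
  finally show ?thesis by (simp add: nn_integral_count_space_finite[OF finite_T])
qed

lemma nn_integral_\<Omega>_snd:
  assumes h: "h \<in> borel_measurable Xs"
  shows "(\<integral>\<^sup>+\<omega>. h (snd \<omega>) \<partial>\<Omega>) = (\<integral>\<^sup>+x. h x \<partial>Xs)"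
proof -
  have "(\<integral>\<^sup>+\<omega>. h (snd \<omega>) \<partial>\<Omega>) = (\<Sum>t\<in>T. ennreal (1 / m) * \<integral>\<^sup>+x. h x \<partial>Xs)"
    using nn_integral_\<Omega>[of "\<lambda>\<omega>. h (snd \<omega>)", OF measurable_compose[OF measurable_snd h]] by simp
  then show ?thesis by (simp only: sum_T_uniform)
qed

lemma nn_integral_\<Omega>_density:
  assumes h: "h \<in> borel_measurable (cT \<Otimes>\<^sub>M Xs)"
  shows "(\<integral>\<^sup>+\<omega>. h \<omega> \<partial>\<Omega>) = (\<integral>\<^sup>+z. ennreal (1 / m) * h z \<partial>(cT \<Otimes>\<^sub>M Xs))"
proof -
  have "(\<integral>\<^sup>+z. ennreal (1 / m) * h z \<partial>(cT \<Otimes>\<^sub>M Xs))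
      = (\<Sum>t\<in>T. \<integral>\<^sup>+x. ennreal (1 / m) * h (t, x) \<partial>Xs)"
    using h by (intro nn_integral_count_space_pair[OF finite_T sigma_finite_Xs]) measurable
  also have "\<dots> = (\<Sum>t\<in>T. ennreal (1 / m) * \<integral>\<^sup>+x. h (t, x) \<partial>Xs)"
    by (intro sum.cong refl nn_integral_cmult measurable_compose[OF measurable_Pair_T h])
  finally show ?thesis by (simp add: nn_integral_\<Omega>[OF h])
qed

lemma distributed_TYX: "distributed \<Omega> (cT \<Otimes>\<^sub>M (cYs \<Otimes>\<^sub>M Xs)) TYX (\<lambda>z. ennreal (p_joint z))"
proof (rule distributedI_nn_integral)
  show "TYX \<in> \<Omega> \<rightarrow>\<^sub>M (cT \<Otimes>\<^sub>M (cYs \<Otimes>\<^sub>M Xs))"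
    using measurable_TYX measurable_\<Omega>_iff by blast
qed (use measurable_p_joint nn_integral_p_joint in simp_all)

lemma distributed_YX: "distributed \<Omega> (cYs \<Otimes>\<^sub>M Xs) YX (\<lambda>z. ennreal (p_YX z))"
  by (rule distributedI_nn_integral[OF measurable_YX]) (use measurable_p_YX nn_integral_p_YX in simp_all)

lemma distributed_theta: "distributed \<Omega> cT fst (\<lambda>_. ennreal (1 / m))"
  by (rule distributedI_nn_integral) (simp_all add: measurable_\<Omega>_iff nn_integral_\<Omega>_fst)

lemma distributed_Xn: "distributed \<Omega> Xs snd (\<lambda>_. 1)"
  by (rule distributedI_nn_integral) (simp_all add: measurable_\<Omega>_iff nn_integral_\<Omega>_snd)

lemma distributed_theta_Xn: "distributed \<Omega> (cT \<Otimes>\<^sub>M Xs) (\<lambda>\<omega>. (fst \<omega>, snd \<omega>)) (\<lambda>_. ennreal (1 / m))"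
  by (rule distributedI_nn_integral) (simp_all add: measurable_\<Omega>_iff nn_integral_\<Omega>_density)

lemma p_YX_bounds:
  assumes "\<omega> \<in> space \<Omega>"
  shows "1 / m \<le> p_YX (YX \<omega>)" "p_YX (YX \<omega>) \<le> 1"
proof -
  obtain t x where \<omega>: "\<omega> = (t, x)" and t: "t \<in> T"
    using assms space_\<Omega> by auto
  have "p_joint (t, YX \<omega>) \<le> p_YX (YX \<omega>)"
    unfolding p_YX_def by (rule member_le_sum[OF t _ finite_T]) (simp add: p_joint_nonneg)
  moreover have "p_joint (t, YX \<omega>) = 1 / m"
    using \<omega> by (simp add: p_joint_def)
  ultimately show "1 / m \<le> p_YX (YX \<omega>)" by simp
  have "p_YX (YX \<omega>) \<le> (\<Sum>t\<in>T. 1 / m)"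
    unfolding p_YX_def by (rule sum_mono) (simp add: p_joint_def)
  also have "\<dots> = 1" using card_T_pos by simp
  finally show "p_YX (YX \<omega>) \<le> 1" .
qed

lemma p_YX_pos:
  assumes "\<omega> \<in> space \<Omega>"
  shows "0 < p_YX (YX \<omega>)"
proof -
  have "0 < 1 / m" using card_T_pos by simp
  then show ?thesis using p_YX_bounds(1)[OF assms] by linarith
qed

definition mean_log_p_YX :: real where
  "mean_log_p_YX = (\<integral>\<omega>. ln (p_YX (YX \<omega>)) \<partial>\<Omega>)"

lemma measurable_log_p_YX: "(\<lambda>\<omega>. ln (p_YX (YX \<omega>))) \<in> borel_measurable \<Omega>"
  using measurable_compose[OF measurable_YX measurable_p_YX] by measurable

lemma integrable_log_p_YX: "integrable \<Omega> (\<lambda>\<omega>. ln (p_YX (YX \<omega>)))"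
proof -
  interpret prob_space \<Omega> by (rule prob_space_\<Omega>)
  show ?thesis
  proof (rule integrable_const_bound[where B="ln m"])
    show "AE \<omega> in \<Omega>. norm (ln (p_YX (YX \<omega>))) \<le> ln m"
    proof (rule AE_I2)
      fix \<omega> assume \<omega>: "\<omega> \<in> space \<Omega>"
      have "ln (1 / m) \<le> ln (p_YX (YX \<omega>))"
        using p_YX_bounds(1)[OF \<omega>] p_YX_pos[OF \<omega>] card_T_pos by (subst ln_le_cancel_iff) auto
      moreover have "ln (p_YX (YX \<omega>)) \<le> 0"
        using p_YX_bounds(2)[OF \<omega>] p_YX_pos[OF \<omega>] by simp
      ultimately show "norm (ln (p_YX (YX \<omega>))) \<le> ln m"
        using card_T_pos by (simp add: ln_div)
    qed
  qed (rule measurable_log_p_YX)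
qed

lemma mutual_information_theta_Xn:
  "prob_space.mutual_information \<Omega> (exp 1) cT Xs fst snd = 0"
proof -
  interpret information_space \<Omega> "exp 1" by (rule information_space_\<Omega>)
  show ?thesis
    by (rule mutual_information_eq_0[OF sigma_finite_cT sigma_finite_Xs,
          where Px="\<lambda>_. 1 / m" and Py="\<lambda>_. 1" and Pxy="\<lambda>_. 1 / m"])
       (use distributed_theta distributed_Xn distributed_theta_Xn in auto)
qed

lemma mutual_information_theta_YX:
  "prob_space.mutual_information \<Omega> (exp 1) cT (cYs \<Otimes>\<^sub>M Xs) fst YX = - mean_log_p_YX"
proof -
  interpret information_space \<Omega> "exp 1" by (rule information_space_\<Omega>)
  have "mutual_information (exp 1) cT (cYs \<Otimes>\<^sub>M Xs) fst YX
      = (\<integral>z. p_joint z * log (exp 1) (p_joint z / (1 / m * p_YX (snd z))) \<partial>(cT \<Otimes>\<^sub>M (cYs \<Otimes>\<^sub>M Xs)))"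
    using mutual_information_distr[OF sigma_finite_cT sigma_finite_Ys_Xs distributed_theta _
        distributed_YX _ distributed_TYX] p_YX_nonneg p_joint_nonneg card_T_pos
    by simp
  also have "\<dots> = (\<integral>\<omega>. log (exp 1) (p_joint (TYX \<omega>) / (1 / m * p_YX (snd (TYX \<omega>)))) \<partial>\<Omega>)"
    by (rule distributed_integral[OF distributed_TYX])
       (use measurable_p_joint measurable_p_YX p_joint_nonneg in measurable)
  also have "\<dots> = (\<integral>\<omega>. - ln (p_YX (YX \<omega>)) \<partial>\<Omega>)"
  proof (rule Bochner_Integration.integral_cong[OF refl])
    fix \<omega> assume \<omega>: "\<omega> \<in> space \<Omega>"
    have "p_joint (TYX \<omega>) = 1 / m" by (simp add: p_joint_def)
    then show "log (exp 1) (p_joint (TYX \<omega>) / (1 / m * p_YX (snd (TYX \<omega>)))) = - ln (p_YX (YX \<omega>))"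
      using card_T_pos p_YX_pos[OF \<omega>] by (simp add: log_ln[symmetric] ln_div)
  qed
  finally show ?thesis by (simp add: mean_log_p_YX_def)
qed

lemma conditional_entropy_theta_YX:
  "prob_space.conditional_entropy \<Omega> (exp 1) cT (cYs \<Otimes>\<^sub>M Xs) fst YX = ln m + mean_log_p_YX"
proof -
  interpret information_space \<Omega> "exp 1" by (rule information_space_\<Omega>)
  have "conditional_entropy (exp 1) cT (cYs \<Otimes>\<^sub>M Xs) fst YX
      = - (\<integral>z. p_joint z * log (exp 1) (p_joint z / p_YX (snd z)) \<partial>(cT \<Otimes>\<^sub>M (cYs \<Otimes>\<^sub>M Xs)))"
    using conditional_entropy_generic_eq[OF sigma_finite_cT sigma_finite_Ys_Xs distributed_YX _
        distributed_TYX] p_YX_nonneg p_joint_nonneg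
    by (simp add: split_beta')
  also have "(\<integral>z. p_joint z * log (exp 1) (p_joint z / p_YX (snd z)) \<partial>(cT \<Otimes>\<^sub>M (cYs \<Otimes>\<^sub>M Xs)))
      = (\<integral>\<omega>. log (exp 1) (p_joint (TYX \<omega>) / p_YX (snd (TYX \<omega>))) \<partial>\<Omega>)"
    by (rule distributed_integral[OF distributed_TYX])
       (use measurable_p_joint measurable_p_YX p_joint_nonneg in measurable)
  also have "\<dots> = (\<integral>\<omega>. - ln m + - ln (p_YX (YX \<omega>)) \<partial>\<Omega>)"
  proof (rule Bochner_Integration.integral_cong[OF refl])
    fix \<omega> assume \<omega>: "\<omega> \<in> space \<Omega>"
    have "p_joint (TYX \<omega>) = 1 / m" by (simp add: p_joint_def)
    then show "log (exp 1) (p_joint (TYX \<omega>) / p_YX (snd (TYX \<omega>))) = - ln m + - ln (p_YX (YX \<omega>))"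
      using card_T_pos p_YX_pos[OF \<omega>] by (simp add: log_ln[symmetric] ln_div ln_mult)
  qed
  also have "\<dots> = - ln m - mean_log_p_YX"
    using integrable_log_p_YX prob_space.prob_space[OF prob_space_\<Omega>]
    by (simp add: mean_log_p_YX_def)
  finally show ?thesis by simp
qed

lemma H_theta_eq: "H_theta T = ln m"
proof -
  interpret information_space PT "exp 1"
    using prob_space_uniform_count_measure[OF finite_T T_nonempty]
    by (simp add: information_space_def information_space_axioms_def)
  have "distributed PT cT (\<lambda>t. t) (\<lambda>t. ennreal (indicator T t / measure cT T))"
  proof (rule distributedI_nn_integral)
    show "(\<lambda>t. t) \<in> PT \<rightarrow>\<^sub>M cT"
      by (simp add: measurable_cong_sets[OF sets_uniform_count_measure_count_space refl])
    fix A assume "A \<in> sets cT"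
    have "(\<integral>\<^sup>+t. ennreal (indicator T t / measure cT T) * indicator A t \<partial>cT)
        = (\<Sum>t\<in>T. ennreal (1 / m) * indicator A t)"
      using finite_T by (simp add: nn_integral_count_space_finite measure_count_space)
    also have "\<dots> = (\<integral>\<^sup>+t. indicator A t \<partial>PT)"
      unfolding uniform_count_measure_def by (simp add: nn_integral_point_measure_finite[OF finite_T])
    finally show "(\<integral>\<^sup>+t. ennreal (indicator T t / measure cT T) * indicator A t \<partial>cT)
        = (\<integral>\<^sup>+t. indicator A t \<partial>PT)" .
  qed simp
  from entropy_uniform[OF this] show ?thesis
    using finite_T by (simp add: H_theta_def measure_count_space log_ln[symmetric])
qed

section \<open>The law of a single output\<close>

abbreviation "\<Omega>1 \<equiv> single_measure T \<mu>"
abbreviation "Y1 \<equiv> \<lambda>(t, x). g x t"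

definition p_Y :: "'y \<Rightarrow> real" where
  "p_Y y = measure \<Omega>1 (Y1 -` {y} \<inter> space \<Omega>1)"

lemma prob_space_\<Omega>1: "prob_space \<Omega>1"
  unfolding single_measure_def
  by (rule prob_space_pair[OF prob_space_uniform_count_measure[OF finite_T T_nonempty] prob_space_\<mu>])

lemma sets_\<Omega>1: "sets \<Omega>1 = sets (cT \<Otimes>\<^sub>M \<mu>)"
  unfolding single_measure_def
  by (rule sets_pair_measure_cong[OF sets_uniform_count_measure_count_space refl])

lemma measurable_Y1: "Y1 \<in> \<Omega>1 \<rightarrow>\<^sub>M count_space UNIV"
proof -
  have "(\<lambda>z. (\<lambda>t z. g (snd z) t) (fst z) z) \<in> (cT \<Otimes>\<^sub>M \<mu>) \<rightarrow>\<^sub>M count_space UNIV"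
  proof (rule measurable_compose_countable'[where I=T])
    fix t assume "t \<in> T"
    then show "(\<lambda>z. g (snd z) t) \<in> (cT \<Otimes>\<^sub>M \<mu>) \<rightarrow>\<^sub>M count_space UNIV"
      by (rule measurable_compose[OF measurable_snd g_measurable])
  qed (auto simp: finite_T countable_finite)
  then show ?thesis
    by (simp add: split_beta' measurable_cong_sets[OF sets_\<Omega>1 refl])
qed

lemma p_Y_nonneg: "0 \<le> p_Y y"
  by (simp add: p_Y_def)

lemma p_Y_le_1: "p_Y y \<le> 1"
  using prob_space.prob_le_1[OF prob_space_\<Omega>1] by (simp add: p_Y_def)

lemma distributed_Y: "distributed \<Omega>1 (count_space UNIV) Y1 (\<lambda>y. ennreal (p_Y y))"
proof (rule distributedI_nn_integral[OF measurable_Y1])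
  interpret prob_space \<Omega>1 by (rule prob_space_\<Omega>1)
  fix A :: "'y set"
  have sets_fibre: "Y1 -` {y} \<inter> space \<Omega>1 \<in> sets \<Omega>1" for y
    using measurable_Y1 by (rule measurable_sets) simp
  have "(\<integral>\<^sup>+z. indicator A (Y1 z) \<partial>\<Omega>1)
      = (\<integral>\<^sup>+z. (\<Sum>y\<in>UNIV. indicator A y * indicator (Y1 -` {y} \<inter> space \<Omega>1) z) \<partial>\<Omega>1)"
  proof (rule nn_integral_cong)
    fix z assume z: "z \<in> space \<Omega>1"
    have "(\<Sum>y\<in>UNIV. indicator A y * indicator (Y1 -` {y} \<inter> space \<Omega>1) z :: ennreal)
        = (\<Sum>y\<in>UNIV. if Y1 z = y then indicator A y else 0)"
      using z by (intro sum.cong) (auto split: split_indicator)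
    then show "indicator A (Y1 z)
        = (\<Sum>y\<in>UNIV. indicator A y * indicator (Y1 -` {y} \<inter> space \<Omega>1) z :: ennreal)"
      by (simp add: sum.delta)
  qed
  also have "\<dots> = (\<Sum>y\<in>UNIV. \<integral>\<^sup>+z. indicator A y * indicator (Y1 -` {y} \<inter> space \<Omega>1) z \<partial>\<Omega>1)"
    by (rule nn_integral_sum) (use sets_fibre in measurable)
  also have "\<dots> = (\<integral>\<^sup>+y. ennreal (p_Y y) * indicator A y \<partial>count_space UNIV)"
    using sets_fibre
    by (simp add: nn_integral_cmult p_Y_def emeasure_eq_measure nn_integral_count_space_finite
        mult.commute)
  finally show "(\<integral>\<^sup>+y. ennreal (p_Y y) * indicator A y \<partial>count_space UNIV)
      = (\<integral>\<^sup>+z. indicator A (Y1 z) \<partial>\<Omega>1)" ..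
qed simp

lemma Y_law_eq_density: "Y_law T \<mu> g = density (count_space UNIV) (\<lambda>y. ennreal (p_Y y))"
  using distributed_Y unfolding Y_law_def distributed_def by simp

lemma H_Y_eq_integral: "H_Y T \<mu> g = - (\<integral>z. ln (p_Y (Y1 z)) \<partial>\<Omega>1)"
proof -
  interpret information_space \<Omega>1 "exp 1"
    using prob_space_\<Omega>1 by (simp add: information_space_def information_space_axioms_def)
  have "H_Y T \<mu> g = - (\<integral>y. p_Y y * log (exp 1) (p_Y y) \<partial>count_space UNIV)"
    unfolding H_Y_def by (rule entropy_distr[OF distributed_Y p_Y_nonneg])
  also have "(\<integral>y. p_Y y * log (exp 1) (p_Y y) \<partial>count_space UNIV) = (\<integral>z. log (exp 1) (p_Y (Y1 z)) \<partial>\<Omega>1)"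
    by (rule distributed_integral[OF distributed_Y]) (auto simp: p_Y_nonneg)
  finally show ?thesis by (simp add: log_ln[symmetric])
qed

lemma H_Y_eq_sum: "H_Y T \<mu> g = (\<Sum>y\<in>UNIV. - (p_Y y * ln (p_Y y)))"
proof -
  interpret information_space \<Omega>1 "exp 1"
    using prob_space_\<Omega>1 by (simp add: information_space_def information_space_axioms_def)
  have "H_Y T \<mu> g = - (\<integral>y. p_Y y * log (exp 1) (p_Y y) \<partial>count_space UNIV)"
    unfolding H_Y_def by (rule entropy_distr[OF distributed_Y p_Y_nonneg])
  then show ?thesis
    by (simp add: lebesgue_integral_count_space_finite log_ln[symmetric] sum_negf)
qed

lemma H_Y_nonneg: "0 \<le> H_Y T \<mu> g"
  unfolding H_Y_eq_sum
  by (intro sum_nonneg entropy_term_bounds(1) p_Y_nonneg p_Y_le_1)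

lemma H_Y_le_card: "H_Y T \<mu> g \<le> real CARD('y)"
proof -
  have "H_Y T \<mu> g \<le> (\<Sum>y\<in>(UNIV::'y set). 1)"
    unfolding H_Y_eq_sum by (intro sum_mono entropy_term_bounds(2) p_Y_nonneg p_Y_le_1)
  then show ?thesis by simp
qed

lemma nn_integral_Xs_component:
  assumes i: "i < n" and f: "f \<in> borel_measurable \<mu>"
  shows "(\<integral>\<^sup>+x. f (x i) \<partial>Xs) = (\<integral>\<^sup>+y. f y \<partial>\<mu>)"
proof -
  interpret product_prob_space "\<lambda>_. \<mu>" "{..<n}"
    using prob_space_\<mu> by (simp add: product_prob_space_def product_sigma_finite_def
        product_prob_space_axioms_def prob_space_imp_sigma_finite)
  have "distr Xs \<mu> (\<lambda>x. x i) = \<mu>"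
    unfolding Xn_space_def using i by (intro PiM_component) simp
  then have "(\<integral>\<^sup>+y. f y \<partial>\<mu>) = (\<integral>\<^sup>+y. f y \<partial>distr Xs \<mu> (\<lambda>x. x i))" by simp
  also have "\<dots> = (\<integral>\<^sup>+x. f (x i) \<partial>Xs)"
    using i f by (intro nn_integral_distr) (auto simp: Xn_space_def)
  finally show ?thesis ..
qed

lemma measurable_sample: "i < n \<Longrightarrow> (\<lambda>\<omega>. (fst \<omega>, snd \<omega> i)) \<in> (cT \<Otimes>\<^sub>M Xs) \<rightarrow>\<^sub>M (cT \<Otimes>\<^sub>M \<mu>)"
  unfolding Xn_space_def by measurable

lemma measurable_sample_\<Omega>: "i < n \<Longrightarrow> (\<lambda>\<omega>. (fst \<omega>, snd \<omega> i)) \<in> \<Omega> \<rightarrow>\<^sub>M \<Omega>1"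
  using measurable_sample by (simp add: measurable_cong_sets[OF sets_\<Omega> sets_\<Omega>1])

lemma distr_sample:
  assumes i: "i < n"
  shows "distr \<Omega> \<Omega>1 (\<lambda>\<omega>. (fst \<omega>, snd \<omega> i)) = \<Omega>1"
proof (rule measure_eqI)
  fix A assume "A \<in> sets (distr \<Omega> \<Omega>1 (\<lambda>\<omega>. (fst \<omega>, snd \<omega> i)))"
  then have A: "A \<in> sets \<Omega>1" by simp
  then have ind: "indicator A \<in> borel_measurable (cT \<Otimes>\<^sub>M \<mu>)" using sets_\<Omega>1 by simp
  have "emeasure (distr \<Omega> \<Omega>1 (\<lambda>\<omega>. (fst \<omega>, snd \<omega> i))) A
      = (\<integral>\<^sup>+\<omega>. indicator A (fst \<omega>, snd \<omega> i) \<partial>\<Omega>)"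
    by (rule emeasure_distr_eq_nn_integral[OF measurable_sample_\<Omega>[OF i] A])
  also have "\<dots> = (\<Sum>t\<in>T. ennreal (1 / m) * \<integral>\<^sup>+x. indicator A (t, x i) \<partial>Xs)"
    using nn_integral_\<Omega>[OF measurable_compose[OF measurable_sample[OF i] ind]] by simp
  also have "\<dots> = (\<Sum>t\<in>T. ennreal (1 / m) * \<integral>\<^sup>+y. indicator A (t, y) \<partial>\<mu>)"
    by (intro sum.cong refl arg_cong2[where f="(*)"] nn_integral_Xs_component[OF i]
        measurable_compose[OF measurable_Pair_T ind])
  also have "\<dots> = (\<integral>\<^sup>+z. indicator A z \<partial>\<Omega>1)"
    unfolding single_measure_def
    by (rule nn_integral_uniform_count_measure_pair[OF finite_T T_nonempty
          prob_space_imp_sigma_finite[OF prob_space_\<mu>] ind, symmetric])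
  finally show "emeasure (distr \<Omega> \<Omega>1 (\<lambda>\<omega>. (fst \<omega>, snd \<omega> i))) A = emeasure \<Omega>1 A"
    using A by simp
qed simp

lemma measurable_log_p_Y: "(\<lambda>z. ln (p_Y (Y1 z))) \<in> borel_measurable \<Omega>1"
  using measurable_compose[OF measurable_Y1, of "\<lambda>y. ln (p_Y y)" borel] by simp

lemma integral_log_p_Y_sample:
  assumes i: "i < n"
  shows "(\<integral>\<omega>. ln (p_Y (g (snd \<omega> i) (fst \<omega>))) \<partial>\<Omega>) = - H_Y T \<mu> g"
proof -
  have "(\<integral>\<omega>. ln (p_Y (g (snd \<omega> i) (fst \<omega>))) \<partial>\<Omega>)
      = (\<integral>z. ln (p_Y (Y1 z)) \<partial>distr \<Omega> \<Omega>1 (\<lambda>\<omega>. (fst \<omega>, snd \<omega> i)))"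
    by (subst integral_distr[OF measurable_sample_\<Omega>[OF i] measurable_log_p_Y]) simp
  then show ?thesis by (simp add: distr_sample[OF i] H_Y_eq_integral)
qed

lemma integrable_log_p_Y_sample:
  assumes i: "i < n"
  shows "integrable \<Omega> (\<lambda>\<omega>. ln (p_Y (g (snd \<omega> i) (fst \<omega>))))"
proof -
  interpret prob_space \<Omega> by (rule prob_space_\<Omega>)
  show ?thesis
  proof (rule integrable_const_bound[where B="\<Sum>y\<in>UNIV. \<bar>ln (p_Y y)\<bar>"])
    show "AE \<omega> in \<Omega>. norm (ln (p_Y (g (snd \<omega> i) (fst \<omega>)))) \<le> (\<Sum>y\<in>UNIV. \<bar>ln (p_Y y)\<bar>)"
      by (intro AE_I2, simp) (rule member_le_sum[where f="\<lambda>y. \<bar>ln (p_Y y)\<bar>"], auto)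
    show "(\<lambda>\<omega>. ln (p_Y (g (snd \<omega> i) (fst \<omega>)))) \<in> borel_measurable \<Omega>"
      using measurable_compose[OF measurable_sample_\<Omega>[OF i] measurable_log_p_Y] by simp
  qed
qed

lemma AE_p_Y_sample_pos: "AE \<omega> in \<Omega>. \<forall>i\<in>{..<n}. 0 < p_Y (g (snd \<omega> i) (fst \<omega>))"
proof (rule AE_finite_allI)
  fix i assume "i \<in> {..<n}"
  then have i: "i < n" by simp
  have "{z \<in> space \<Omega>1. 0 < p_Y (Y1 z)} = Y1 -` {y. 0 < p_Y y} \<inter> space \<Omega>1" by auto
  then have pos_set: "{z \<in> space \<Omega>1. 0 < p_Y (Y1 z)} \<in> sets \<Omega>1"
    using measurable_sets[OF measurable_Y1, of "{y. 0 < p_Y y}"] by simp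
  have "AE y in density (count_space UNIV) (\<lambda>y. ennreal (p_Y y)). 0 < p_Y y"
    by (subst AE_density) auto
  then have "AE z in \<Omega>1. 0 < p_Y (Y1 z)"
    unfolding distributed_distr_eq_density[OF distributed_Y, symmetric]
    by (subst (asm) AE_distr_iff[OF measurable_Y1]) auto
  then have "AE z in distr \<Omega> \<Omega>1 (\<lambda>\<omega>. (fst \<omega>, snd \<omega> i)). 0 < p_Y (Y1 z)"
    unfolding distr_sample[OF i] .
  then show "AE \<omega> in \<Omega>. 0 < p_Y (g (snd \<omega> i) (fst \<omega>))"
    by (subst (asm) AE_distr_iff[OF measurable_sample_\<Omega>[OF i] pos_set]) simp
qed simp

section \<open>Divergence from the null law\<close>

definition q_Yn :: "(nat \<Rightarrow> 'y) \<Rightarrow> real" where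
  "q_Yn y = (\<Prod>i<n. p_Y (y i))"

lemma q_Yn_nonneg: "0 \<le> q_Yn y"
  by (simp add: q_Yn_def prod_nonneg p_Y_nonneg)

lemma q_Yn_Yn: "q_Yn (Yn \<omega>) = (\<Prod>i<n. p_Y (g (snd \<omega> i) (fst \<omega>)))"
  by (simp add: q_Yn_def Yn_rv_def)

lemma PiM_Y_law_eq_density: "PiM {..<n} (\<lambda>_. Y_law T \<mu> g) = density cYs (\<lambda>y. ennreal (q_Yn y))"
proof (rule measure_eqI_finite[where A=Ys])
  have "sets (PiM {..<n} (\<lambda>_. Y_law T \<mu> g)) = sets (Yn_space n :: (nat \<Rightarrow> 'y) measure)"
    unfolding Yn_space_def by (rule sets_PiM_cong) (auto simp: Y_law_def)
  then show "sets (PiM {..<n} (\<lambda>_. Y_law T \<mu> g)) = Pow Ys"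
    by (simp add: Yn_space_eq_count_space)
  show "sets (density cYs (\<lambda>y. ennreal (q_Yn y))) = Pow Ys" by simp
  show "finite Ys" by (rule finite_Ys)
  fix a assume a: "a \<in> Ys"
  have singleton: "{a} = PiE {..<n} (\<lambda>i. {a i})"
    using a by (auto simp: PiE_iff extensional_def fun_eq_iff) (metis lessThan_iff)
  interpret product_sigma_finite "\<lambda>_::nat. Y_law T \<mu> g"
    unfolding product_sigma_finite_def Y_law_def
    using prob_space.prob_space_distr[OF prob_space_\<Omega>1 measurable_Y1] prob_space_imp_sigma_finite
    by blast
  have "emeasure (PiM {..<n} (\<lambda>_. Y_law T \<mu> g)) {a} = (\<Prod>i<n. emeasure (Y_law T \<mu> g) {a i})"
    unfolding singleton by (subst emeasure_PiM) (auto simp: Y_law_def)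
  also have "\<dots> = ennreal (q_Yn a)"
    by (simp add: Y_law_eq_density emeasure_density nn_integral_count_space_finite indicator_def
        q_Yn_def prod_ennreal p_Y_nonneg)
  finally show "emeasure (PiM {..<n} (\<lambda>_. Y_law T \<mu> g)) {a}
      = emeasure (density cYs (\<lambda>y. ennreal (q_Yn y))) {a}"
    using a by (simp add: emeasure_density)
qed

lemma Q_law_eq_density: "Q_law T \<mu> g n = density (cYs \<Otimes>\<^sub>M Xs) (\<lambda>z. ennreal (q_Yn (fst z)))"
proof -
  have "Q_law T \<mu> g n = density cYs (\<lambda>y. ennreal (q_Yn y)) \<Otimes>\<^sub>M density Xs (\<lambda>_. 1)"
    by (simp add: Q_law_def PiM_Y_law_eq_density density_1)
  also have "\<dots> = density (cYs \<Otimes>\<^sub>M Xs) (\<lambda>(y, x). ennreal (q_Yn y) * 1)"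
    by (rule pair_measure_density) (auto simp: density_1 sigma_finite_Xs)
  finally show ?thesis by (simp add: split_beta')
qed

lemma P_law_eq_density: "P_law T \<mu> g n = density (cYs \<Otimes>\<^sub>M Xs) (\<lambda>z. ennreal (p_YX z))"
  unfolding P_law_def Yn_space_eq_count_space Xn_space_def[symmetric]
  using distributed_distr_eq_density[OF distributed_YX] by (simp add: Yn_rv_def)

lemma measurable_q_Yn_fst: "(\<lambda>z. q_Yn (fst z)) \<in> borel_measurable (cYs \<Otimes>\<^sub>M Xs)"
  using measurable_compose[OF measurable_fst, of q_Yn cYs borel] by simp

lemma AE_q_Yn_zero_imp_p_YX_zero: "AE z in cYs \<Otimes>\<^sub>M Xs. q_Yn (fst z) = 0 \<longrightarrow> p_YX z = 0"
proof -
  have q_set: "{z \<in> space (cYs \<Otimes>\<^sub>M Xs). q_Yn (fst z) \<noteq> 0} \<in> sets (cYs \<Otimes>\<^sub>M Xs)"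
    using measurable_q_Yn_fst by measurable
  have "AE \<omega> in \<Omega>. q_Yn (fst (YX \<omega>)) \<noteq> 0"
    using AE_p_Y_sample_pos
  proof eventually_elim
    case (elim \<omega>)
    then have "0 < q_Yn (Yn \<omega>)"
      unfolding q_Yn_Yn by (intro prod_pos) blast
    then show ?case by simp
  qed
  then have "AE z in density (cYs \<Otimes>\<^sub>M Xs) (\<lambda>z. ennreal (p_YX z)). q_Yn (fst z) \<noteq> 0"
    unfolding distributed_distr_eq_density[OF distributed_YX, symmetric]
    by (subst AE_distr_iff[OF measurable_YX q_set])
  then have "AE z in cYs \<Otimes>\<^sub>M Xs. 0 < ennreal (p_YX z) \<longrightarrow> q_Yn (fst z) \<noteq> 0"
    by (subst (asm) AE_density) (use measurable_p_YX in simp_all)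
  then show ?thesis
    by eventually_elim (use p_YX_nonneg in \<open>auto simp: less_le\<close>)
qed

lemma KL_PQ_eq_integral:
  "KL_PQ T \<mu> g n = (\<integral>\<omega>. log (exp 1) (p_YX (YX \<omega>) / q_Yn (fst (YX \<omega>))) \<partial>\<Omega>)"
proof -
  interpret sigma_finite_measure "cYs \<Otimes>\<^sub>M Xs" by (rule sigma_finite_Ys_Xs)
  have "KL_PQ T \<mu> g n = (\<integral>z. p_YX z * log (exp 1) (p_YX z / q_Yn (fst z)) \<partial>(cYs \<Otimes>\<^sub>M Xs))"
    unfolding KL_PQ_def Q_law_eq_density P_law_eq_density
    by (rule KL_density_density)
       (use measurable_q_Yn_fst measurable_p_YX q_Yn_nonneg p_YX_nonneg
         AE_q_Yn_zero_imp_p_YX_zero in auto)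
  also have "\<dots> = (\<integral>\<omega>. log (exp 1) (p_YX (YX \<omega>) / q_Yn (fst (YX \<omega>))) \<partial>\<Omega>)"
    by (rule distributed_integral[OF distributed_YX])
       (use measurable_q_Yn_fst measurable_p_YX p_YX_nonneg in measurable)
  finally show ?thesis .
qed

lemma KL_PQ_eq: "KL_PQ T \<mu> g n = mean_log_p_YX + real n * H_Y T \<mu> g"
proof -
  let ?log_p_Y = "\<lambda>i \<omega>. ln (p_Y (g (snd \<omega> i) (fst \<omega>)))"
  have "KL_PQ T \<mu> g n = (\<integral>\<omega>. ln (p_YX (YX \<omega>)) - (\<Sum>i<n. ?log_p_Y i \<omega>) \<partial>\<Omega>)"
    unfolding KL_PQ_eq_integral
  proof (rule integral_cong_AE)
    show "(\<lambda>\<omega>. log (exp 1) (p_YX (YX \<omega>) / q_Yn (fst (YX \<omega>)))) \<in> borel_measurable \<Omega>"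
      using measurable_compose[OF measurable_YX, of "\<lambda>z. log (exp 1) (p_YX z / q_Yn (fst z))" borel]
        measurable_q_Yn_fst measurable_p_YX by measurable
    show "(\<lambda>\<omega>. ln (p_YX (YX \<omega>)) - (\<Sum>i<n. ?log_p_Y i \<omega>)) \<in> borel_measurable \<Omega>"
      using measurable_log_p_YX integrable_log_p_Y_sample
      by (intro borel_measurable_diff borel_measurable_sum) auto
    show "AE \<omega> in \<Omega>. log (exp 1) (p_YX (YX \<omega>) / q_Yn (fst (YX \<omega>)))
        = ln (p_YX (YX \<omega>)) - (\<Sum>i<n. ?log_p_Y i \<omega>)"
      using AE_space AE_p_Y_sample_pos
    proof eventually_elim
      case (elim \<omega>)
      then have "0 < q_Yn (Yn \<omega>)" "ln (q_Yn (Yn \<omega>)) = (\<Sum>i<n. ?log_p_Y i \<omega>)"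
        unfolding q_Yn_Yn by (blast intro: prod_pos, force intro: ln_prod)
      then show ?case
        using p_YX_pos[OF \<open>\<omega> \<in> space \<Omega>\<close>] by (simp add: log_ln[symmetric] ln_div)
    qed
  qed
  also have "\<dots> = mean_log_p_YX - (\<Sum>i<n. \<integral>\<omega>. ?log_p_Y i \<omega> \<partial>\<Omega>)"
  proof -
    have "integrable \<Omega> (\<lambda>\<omega>. \<Sum>i<n. ?log_p_Y i \<omega>)"
      using integrable_log_p_Y_sample by (intro Bochner_Integration.integrable_sum) simp
    moreover have "(\<integral>\<omega>. (\<Sum>i<n. ?log_p_Y i \<omega>) \<partial>\<Omega>) = (\<Sum>i<n. \<integral>\<omega>. ?log_p_Y i \<omega> \<partial>\<Omega>)"
      using integrable_log_p_Y_sample by (intro Bochner_Integration.integral_sum) simp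
    ultimately show ?thesis
      using integrable_log_p_YX by (simp add: mean_log_p_YX_def Bochner_Integration.integral_diff)
  qed
  also have "\<dots> = mean_log_p_YX + real n * H_Y T \<mu> g"
    by (simp add: integral_log_p_Y_sample)
  finally show ?thesis .
qed

lemma cond_MI_eq: "cond_MI T \<mu> g n = real n * H_Y T \<mu> g - KL_PQ T \<mu> g n"
proof -
  have "cond_MI T \<mu> g n = prob_space.mutual_information \<Omega> (exp 1) cT (cYs \<Otimes>\<^sub>M Xs) fst YX
      - prob_space.mutual_information \<Omega> (exp 1) cT Xs fst snd"
    unfolding cond_MI_def prob_space.conditional_mutual_information_def[OF prob_space_\<Omega>]
      Yn_space_eq_count_space ..
  then show ?thesis
    by (simp add: mutual_information_theta_Xn mutual_information_theta_YX KL_PQ_eq)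
qed

lemma cond_H_eq: "cond_H T \<mu> g n = ln m + mean_log_p_YX"
  unfolding cond_H_def Yn_space_eq_count_space by (rule conditional_entropy_theta_YX)

lemma normalized_information_eq:
  assumes "card T \<noteq> 1"
  shows "(1 - cond_H T \<mu> g n / H_theta T) + KL_PQ T \<mu> g n / H_theta T
    = real n * H_Y T \<mu> g / H_theta T"
proof -
  have "ln m \<noteq> 0" using assms card_T_pos by simp
  then show ?thesis
    unfolding cond_H_eq KL_PQ_eq H_theta_eq by (simp add: field_simps)
qed

end

theorem proposition3:
  fixes Th :: "nat \<Rightarrow> (nat \<Rightarrow> real) set"
    and M L n :: "nat \<Rightarrow> nat"
    and D :: "nat \<Rightarrow> (nat \<Rightarrow> real) measure"
    and g :: "nat \<Rightarrow> (nat \<Rightarrow> real) \<Rightarrow> (nat \<Rightarrow> real) \<Rightarrow> 'y::finite"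
  assumes Th_sphere: "\<And>N. Th N \<subseteq> sphere_vecs N"
    and Th_finite: "\<And>N. finite (Th N)"
    and Th_ne: "\<And>N. Th N \<noteq> {}"
    and M_card: "\<And>N. card (Th N) = M N"
    and M_inf: "filterlim M at_top sequentially"
    and Th_inner: "\<And>N t t'. t \<in> Th N \<Longrightarrow> t' \<in> Th N \<Longrightarrow> inner_vec N t t' \<ge> 0"
    and D_prob: "\<And>N. prob_space (D N)"
    and D_sets: "\<And>N. sets (D N) = sets (euclid_space (L N))"
    and g_meas: "\<And>N t. t \<in> Th N \<Longrightarrow> (\<lambda>x. g N x t) \<in> D N \<rightarrow>\<^sub>M count_space UNIV"
  shows "(\<forall>N. cond_MI (Th N) (D N) (g N) (n N)
              = real (n N) * H_Y (Th N) (D N) (g N) - KL_PQ (Th N) (D N) (g N) (n N))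
       \<and> (\<exists>\<epsilon> :: nat \<Rightarrow> real. \<epsilon> \<longlonglongrightarrow> 0 \<and>
           (\<forall>\<^sub>F N in sequentially.
              (1 - cond_H (Th N) (D N) (g N) (n N) / H_theta (Th N))
                + KL_PQ (Th N) (D N) (g N) (n N) / H_theta (Th N)
              = (1 + \<epsilon> N) * (real (n N) / real (n_star (Th N) (D N) (g N)))))"
proof -
  have channel: "noiseless_channel (Th N) (D N) (g N)" for N
    by (simp add: noiseless_channel_def Th_finite Th_ne D_prob g_meas)
  have "H_theta (Th N) = ln (real (M N))" for N
    using noiseless_channel.H_theta_eq[OF channel] M_card by simp
  then have H_theta_lim: "filterlim (\<lambda>N. H_theta (Th N)) at_top sequentially"
    using filterlim_compose[OF ln_at_top filterlim_compose[OF filterlim_real_sequentially M_inf]]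
    by simp
  obtain \<epsilon> :: "nat \<Rightarrow> real" where "\<epsilon> \<longlonglongrightarrow> 0" and approx: "\<forall>\<^sub>F N in sequentially.
      real (n N) * H_Y (Th N) (D N) (g N) / H_theta (Th N)
      = (1 + \<epsilon> N) * (real (n N) / real (nat \<lfloor>H_theta (Th N) / H_Y (Th N) (D N) (g N)\<rfloor>))"
    using floor_quotient_asymptotic[OF H_theta_lim, where h="\<lambda>N. H_Y (Th N) (D N) (g N)"
        and r="\<lambda>N. real (n N)"] noiseless_channel.H_Y_nonneg[OF channel]
        noiseless_channel.H_Y_le_card[OF channel] by blast
  have "\<forall>\<^sub>F N in sequentially. 2 \<le> M N"
    using M_inf by (simp add: filterlim_at_top)
  with approx have "\<forall>\<^sub>F N in sequentially.
      (1 - cond_H (Th N) (D N) (g N) (n N) / H_theta (Th N))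
        + KL_PQ (Th N) (D N) (g N) (n N) / H_theta (Th N)
      = (1 + \<epsilon> N) * (real (n N) / real (n_star (Th N) (D N) (g N)))"
    by eventually_elim
       (simp add: noiseless_channel.normalized_information_eq[OF channel] M_card n_star_def)
  with \<open>\<epsilon> \<longlonglongrightarrow> 0\<close> show ?thesis
    using noiseless_channel.cond_MI_eq[OF channel] by blast
qed

end
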